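(* Let $(r_{i,j})_{i\ge 0,\, j\in\mathbb{Z}}$ be the Pascal rhombus, defined by $r_{0,0}=r_{1,-1}=r_{1,0}=r_{1,1}=1$, $r_{0,j}=0$ for $j\neq 0$, $r_{1,j}=0$ for $j\notin\{-1,0,1\}$, and $r_{i,j}=r_{i-1,j-1}+r_{i-1,j}+r_{i-1,j+1}+r_{i-2,j}$ for $i\ge 2$, $j\in\mathbb{Z}$. Then for all integers $i\ge 0$ and $j\ge 0$, $$r_{i,j}=\sum_{m=0}^{\lfloor (i-j)/2\rfloor}\binom{2m+j}{m}F^{(j+2m+1)}_{i-j-2m+1},$$ where $F^{(r)}_{k}$ are the convolved Fibonacci numbers.
   Context: For a positive integer $r$, the convolved Fibonacci numbers $F^{(r)}_{k}$ ($k\ge 1$) are defined by $(1-x-x^2)^{-r}=\sum_{k\ge 0}F^{(r)}_{k+1}x^k$. An empty sum (upper limit negative) equals $0$. *)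

theory Defs
  imports "HOL-Computational_Algebra.Formal_Power_Series"
begin

fun rhombus :: "nat \<Rightarrow> int \<Rightarrow> int" where
  "rhombus 0 j = (if j = 0 then 1 else 0)"
| "rhombus (Suc 0) j = (if j \<in> {-1, 0, 1} then 1 else 0)"
| "rhombus (Suc (Suc i)) j =
     rhombus (Suc i) (j - 1) + rhombus (Suc i) j + rhombus (Suc i) (j + 1) + rhombus i j"

text \<open>Convolved Fibonacci numbers: (1 - x - x^2)^(-r) = sum_{k\<ge>0} F^(r)_(k+1) x^k,
  so F^(r)_k is the (k-1)-th coefficient, for k \<ge> 1.\<close>
definition convFib :: "nat \<Rightarrow> nat \<Rightarrow> rat" where
  "convFib r k = fps_nth ((inverse (1 - fps_X - fps_X ^ 2 :: rat fps)) ^ r) (k - 1)"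

end

theory Submission
  imports Defs
begin

text \<open>The rhombus recurrence says that the generating function of \<open>r\<close> is
  \<open>1 / ((1 - x - x^2) - x (y + 1/y)) = \<Sum>n. x^n (y + 1/y)^n / (1 - x - x^2)^(n+1)\<close>.
  The coefficient of \<open>y^j\<close> in \<open>(y + 1/y)^n\<close> counts the walks of \<open>n\<close> steps \<open>\<plusminus>1\<close> from \<open>0\<close>
  to \<open>j\<close>; it is \<open>n choose (n+j)/2\<close> and vanishes unless \<open>n = j + 2m\<close>. The coefficient of \<open>x^i\<close>
  in \<open>x^n / (1 - x - x^2)^(n+1)\<close> is the convolved Fibonacci number \<open>F^(n+1)_(i-n+1)\<close>.
  Rather than manipulating bivariate series, the resulting formula
  \<open>r(i,j) = \<Sum>n\<le>i. (walks of length n to j) * F^(n+1)_(i-n+1)\<close> is checked against the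
  recurrence by induction on \<open>i\<close>, using \<open>(1 - x - x^2)^-r = (1 - x - x^2)^-(r+1) (1 - x - x^2)\<close>
  and Pascal's rule for the walks.\<close>

definition fib_denom :: "rat fps" where
  "fib_denom = 1 - fps_X - fps_X ^ 2"

text \<open>\<open>fibconv r k\<close> is \<open>F^(r)_(k+1)\<close>, extended by \<open>0\<close> to negative \<open>k\<close>.\<close>
definition fibconv :: "nat \<Rightarrow> int \<Rightarrow> rat" where
  "fibconv r k = (if k < 0 then 0 else fps_nth (inverse fib_denom ^ r) (nat k))"

lemma fibconv_neg: "k < 0 \<Longrightarrow> fibconv r k = 0"
  by (simp add: fibconv_def)

lemma fibconv_0_left: "fibconv 0 k = (if k = 0 then 1 else 0)"
  by (auto simp: fibconv_def)

lemma fibconv_Suc: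
  "fibconv (Suc r) k = fibconv r k + fibconv (Suc r) (k - 1) + fibconv (Suc r) (k - 2)"
proof (cases "k < 0")
  case True
  then show ?thesis by (simp add: fibconv_def)
next
  case False
  define Q where "Q = inverse fib_denom ^ Suc r"
  have "Q * fib_denom = inverse fib_denom ^ r"
    unfolding Q_def using inverse_mult_eq_1[of fib_denom]
    by (simp add: fib_denom_def mult.assoc mult.commute mult.left_commute)
  then have "inverse fib_denom ^ r = Q - fps_X * Q - fps_X ^ 2 * Q"
    by (simp add: fib_denom_def algebra_simps)
  then have "fps_nth (inverse fib_denom ^ r) (nat k) =
      fps_nth Q (nat k) - fps_nth (fps_X * Q) (nat k) - fps_nth (fps_X ^ 2 * Q) (nat k)"
    by simp
  then show ?thesis
    using False unfolding fibconv_def Q_def[symmetric]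
    by (auto simp: fps_X_power_mult_nth nat_diff_distrib)
qed

lemma fibconv_at_0: "fibconv r 0 = 1"
  by (induction r) (simp_all add: fibconv_0_left fibconv_neg fibconv_Suc[where k = 0])

lemma convFib_eq_fibconv: "convFib r (Suc k) = fibconv r (int k)"
  by (simp add: convFib_def fibconv_def fib_denom_def)

definition pm_walks :: "nat \<Rightarrow> int \<Rightarrow> rat" where
  "pm_walks n j = (if even (int n + j) \<and> 0 \<le> int n + j
     then of_nat (n choose nat ((int n + j) div 2)) else 0)"

lemma pm_walks_0: "pm_walks 0 j = (if j = 0 then 1 else 0)"
  by (auto simp: pm_walks_def elim!: evenE)

lemma pm_walks_Suc: "pm_walks (Suc n) j = pm_walks n (j - 1) + pm_walks n (j + 1)"
proof -
  define s where "s = int (Suc n) + j"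
  have shifts: "int n + (j - 1) = s - 2" "int n + (j + 1) = s"
    by (simp_all add: s_def)
  show ?thesis
  proof (cases "even s \<and> 0 \<le> s")
    case False
    then show ?thesis unfolding pm_walks_def s_def[symmetric] shifts by auto
  next
    case True
    then obtain t where t: "s = 2 * int t"
      by (metis evenE mult_less_0_iff nonneg_int_cases not_le zero_less_numeral)
    show ?thesis
    proof (cases t)
      case 0
      then show ?thesis unfolding pm_walks_def s_def[symmetric] shifts using t by simp
    next
      case (Suc u)
      then have "s - 2 = 2 * int u" "nat (1 + int u) = Suc u" using t by simp_all
      then show ?thesis unfolding pm_walks_def s_def[symmetric] shifts using t Suc
        by (simp del: of_nat_Suc)
    qed
  qed
qed

lemma pm_walks_1: "pm_walks (Suc 0) j = (if j \<in> {-1, 1} then 1 else 0)"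
  using pm_walks_Suc[of 0 j] by (simp add: pm_walks_0)

lemma pm_walks_nonzero:
  assumes "pm_walks n j \<noteq> 0" "0 \<le> j"
  obtains m where "0 \<le> m" "int n = j + 2 * m"
proof -
  have "even (int n + j)" and "0 \<le> int n + j"
    and "(n choose nat ((int n + j) div 2)) \<noteq> 0"
    using assms(1) by (auto simp: pm_walks_def split: if_splits)
  then obtain k where "int n + j = 2 * k" "nat k \<le> n"
    by (metis binomial_eq_0 evenE nonzero_mult_div_cancel_left not_le zero_neq_numeral)
  moreover from this have "k \<le> int n" by (simp add: nat_le_iff)
  ultimately have "int n = j + 2 * (k - j)" "0 \<le> k - j" by simp_all
  then show ?thesis by (rule that[rotated])
qed

lemma pm_walks_eq_choose:
  assumes "0 \<le> j" "0 \<le> m"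
  shows "pm_walks (nat (j + 2 * m)) j = of_nat (nat (2 * m + j) choose nat m)"
proof -
  define n where "n = nat (j + 2 * m)"
  have "nat (j + m) \<le> n" "n - nat (j + m) = nat m"
    using assms by (simp_all add: n_def nat_diff_distrib)
  then have "(n choose nat (j + m)) = (n choose nat m)"
    by (metis binomial_symmetric)
  moreover have "int n + j = 2 * (j + m)" using assms by (simp add: n_def)
  ultimately show ?thesis
    using assms by (simp add: pm_walks_def n_def[symmetric]) (simp add: n_def add.commute)
qed

definition rhombus_sum :: "nat \<Rightarrow> int \<Rightarrow> rat" where
  "rhombus_sum i j = (\<Sum>n\<le>i. pm_walks n j * fibconv (Suc n) (int i - int n))"

lemma rhombus_sum_extend:
  assumes "i \<le> N"
  shows "rhombus_sum i j = (\<Sum>n\<le>N. pm_walks n j * fibconv (Suc n) (int i - int n))"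
  unfolding rhombus_sum_def
  by (rule sum.mono_neutral_left) (use assms in \<open>auto simp: fibconv_neg\<close>)

lemma rhombus_eq_rhombus_sum: "of_int (rhombus i j) = rhombus_sum i j"
proof (induction i j rule: rhombus.induct)
  case (1 j)
  show ?case by (simp add: rhombus_sum_def pm_walks_0 fibconv_at_0)
next
  case (2 j)
  have "fibconv 1 1 = 1"
    using fibconv_Suc[of 0 1] by (simp add: fibconv_0_left fibconv_neg fibconv_at_0)
  then show ?case
    by (auto simp: rhombus_sum_def numeral_2_eq_2 pm_walks_0 pm_walks_1 fibconv_at_0)
next
  case (3 i j)
  let ?S = "\<lambda>r d. \<Sum>n\<le>Suc (Suc i). pm_walks n j * fibconv (r n) (int i + d - int n)"
  have "rhombus_sum (Suc (Suc i)) j = ?S id 2 + ?S Suc 1 + ?S Suc 0"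
    unfolding rhombus_sum_def sum.distrib[symmetric]
    by (intro sum.cong refl, subst fibconv_Suc) (simp add: algebra_simps)
  moreover have "?S id 2 = rhombus_sum (Suc i) (j - 1) + rhombus_sum (Suc i) (j + 1)"
  proof -
    have "?S id 2 = (\<Sum>n\<le>Suc i. pm_walks (Suc n) j * fibconv (Suc n) (int (Suc i) - int n))"
      by (subst sum.atMost_Suc_shift) (simp add: fibconv_0_left add_diff_eq)
    then show ?thesis
      by (simp add: rhombus_sum_def pm_walks_Suc sum.distrib algebra_simps)
  qed
  moreover have "?S Suc 1 = rhombus_sum (Suc i) j" "?S Suc 0 = rhombus_sum i j"
    using rhombus_sum_extend[of "Suc i" "Suc (Suc i)" j] rhombus_sum_extend[of i "Suc (Suc i)" j]
    by (simp_all add: add.commute)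
  ultimately show ?case using "3.IH" by simp
qed

lemma sum_pm_walks_reindex:
  assumes "0 \<le> j"
  shows "(\<Sum>n\<le>i. pm_walks n j * f n) =
    (\<Sum>m \<in> {0 .. (int i - j) div 2}. pm_walks (nat (j + 2 * m)) j * f (nat (j + 2 * m)))"
proof -
  define M where "M = {0 .. (int i - j) div 2}"
  define g where "g m = nat (j + 2 * m)" for m
  have "(\<Sum>n\<le>i. pm_walks n j * f n) = (\<Sum>n\<in>g ` M. pm_walks n j * f n)"
  proof (rule sum.mono_neutral_right)
    show "g ` M \<subseteq> {..i}" unfolding M_def g_def using assms by auto
    show "\<forall>n\<in>{..i} - g ` M. pm_walks n j * f n = 0"
    proof (rule ballI, rule ccontr)
      fix n assume n: "n \<in> {..i} - g ` M" and "pm_walks n j * f n \<noteq> 0"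
      then obtain m where "0 \<le> m" "int n = j + 2 * m"
        using pm_walks_nonzero assms by (metis mult_eq_0_iff)
      moreover from this have "m \<in> M" "g m = n" using n by (auto simp: M_def g_def)
      ultimately show False using n by auto
    qed
  qed simp
  also have "\<dots> = (\<Sum>m\<in>M. pm_walks (g m) j * f (g m))"
    by (rule sum.reindex_cong[where l = g]) (use assms in \<open>auto simp: M_def g_def inj_on_def\<close>)
  finally show ?thesis by (simp add: M_def g_def)
qed

theorem corollary2p5:
  fixes i :: nat and j :: int
  assumes "j \<ge> 0"
  shows "of_int (rhombus i j) =
    (\<Sum>m \<in> {0 .. (int i - j) div 2}.
       of_nat (nat (2 * m + j) choose nat m) * convFib (nat (j + 2 * m + 1)) (nat (int i - j - 2 * m + 1)))"
proof -
  have "of_int (rhombus i j) = (\<Sum>n\<le>i. pm_walks n j * fibconv (Suc n) (int i - int n))"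
    by (simp add: rhombus_eq_rhombus_sum rhombus_sum_def)
  also have "\<dots> = (\<Sum>m \<in> {0 .. (int i - j) div 2}.
      pm_walks (nat (j + 2 * m)) j * fibconv (Suc (nat (j + 2 * m))) (int i - int (nat (j + 2 * m))))"
    by (rule sum_pm_walks_reindex[OF assms])
  also have "\<dots> = (\<Sum>m \<in> {0 .. (int i - j) div 2}.
      of_nat (nat (2 * m + j) choose nat m) * convFib (nat (j + 2 * m + 1)) (nat (int i - j - 2 * m + 1)))"
  proof (rule sum.cong)
    fix m assume "m \<in> {0 .. (int i - j) div 2}"
    then have "0 \<le> m" "j + 2 * m \<le> int i" by auto
    then have "int (nat (j + 2 * m)) = j + 2 * m"
      "nat (j + 2 * m + 1) = Suc (nat (j + 2 * m))"
      "nat (int i - j - 2 * m + 1) = Suc (nat (int i - (j + 2 * m)))"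
      using assms by linarith+
    then show "pm_walks (nat (j + 2 * m)) j * fibconv (Suc (nat (j + 2 * m))) (int i - int (nat (j + 2 * m))) =
        of_nat (nat (2 * m + j) choose nat m) * convFib (nat (j + 2 * m + 1)) (nat (int i - j - 2 * m + 1))"
      using assms \<open>0 \<le> m\<close> \<open>j + 2 * m \<le> int i\<close> by (simp add: pm_walks_eq_choose convFib_eq_fibconv)
  qed simp
  finally show ?thesis .
qed

end
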